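(* Let $\alpha\in(0,1]$. Restrict to elections with exactly two alternatives and to metrics given by the 1-Euclidean space, meaning all agents and alternatives are points of $\mathbb R$ and $d(x,y)=|x-y|$. Then every deterministic voting rule $f$ using ranked preferences with intensities has, under mandatory elicitation, distortion at least $$\max\left(\frac{3-\alpha}{1+\alpha},\ 2\alpha+1\right).$$
   Context: An election $\mathcal E=(N,A,\vec\sigma)$ has agents $N$, alternatives $A$, and for each agent $i$ a preference $\sigma_i=(\pi_i,\Join_i)$. Here $\pi_i:[m]\to A$ is a bijection ($\pi_i(1)$ most preferred) and $\Join_i:[m-1]\to\{\succ,\succ\!\!\succ\}$. The profile $\vec\sigma$ is $\alpha$-consistent with $d$ (mandatory elicitation) if for all $i$ and $j\in[m-1]$: - $\Join_i(j)=\,\succ$ implies $d(i,\pi_i(j+1))\ge d(i,\pi_i(j))>\alpha d(i,\pi_i(j+1))$; - $\Join_i(j)=\,\succ\!\!\succ$ implies $d(i,\pi_i(j))\le\alpha d(i,\pi_i(j+1))$. In this setting the distortion of $a$ is $\mathsf{dist}_\alpha(a,\mathcal E)=\sup_d\sum_i d(i,a)/\min_b\sum_i d(i,b)$, where the supremum ranges over 1-Euclidean metrics $d$ with which $\vec\sigma$ is $\alpha$-consistent. The distortion of $f$ is the supremum of $\mathsf{dist}_\alpha(f(\vec\sigma),\mathcal E)$ over all two-alternative elections. *)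

theory Defs
  imports "HOL-Library.Extended_Real"
begin

(* Intensity symbols: Weak is \<succ>, Strong is \<succ>\<succ>. *)
datatype intensity = Weak | Strong

(* A preference sigma_i = (pi_i, J_i): pi_i : [m] -> A ranks alternatives (pi_i 1 most
   preferred), J_i : [m-1] -> intensity. Alternatives are natural numbers,
   agents are 0..<n. *)
type_synonym pref = "(nat \<Rightarrow> nat) \<times> (nat \<Rightarrow> intensity)"
type_synonym profile = "nat \<Rightarrow> pref"

definition valid_election :: "nat \<Rightarrow> nat set \<Rightarrow> profile \<Rightarrow> bool" where
  "valid_election n A \<sigma> \<longleftrightarrow> n \<ge> 1 \<and> finite A \<and> A \<noteq> {} \<and>
     (\<forall>i<n. bij_betw (fst (\<sigma> i)) {1..card A} A)"

definition euc_d :: "(nat \<Rightarrow> real) \<Rightarrow> (nat \<Rightarrow> real) \<Rightarrow> nat \<Rightarrow> nat \<Rightarrow> real" where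
  "euc_d x y i a = \<bar>x i - y a\<bar>"

definition alpha_consistent ::
  "real \<Rightarrow> nat \<Rightarrow> nat set \<Rightarrow> profile \<Rightarrow> (nat \<Rightarrow> real) \<Rightarrow> (nat \<Rightarrow> real) \<Rightarrow> bool" where
  "alpha_consistent \<alpha> n A \<sigma> x y \<longleftrightarrow>
     (\<forall>i<n. \<forall>j\<in>{1..card A - 1}.
        let \<pi> = fst (\<sigma> i); J = snd (\<sigma> i); d = euc_d x y i in
        (J j = Weak \<longrightarrow> d (\<pi> (j+1)) \<ge> d (\<pi> j) \<and> d (\<pi> j) > \<alpha> * d (\<pi> (j+1))) \<and>
        (J j = Strong \<longrightarrow> d (\<pi> j) \<le> \<alpha> * d (\<pi> (j+1))))"

definition social_cost :: "nat \<Rightarrow> (nat \<Rightarrow> real) \<Rightarrow> (nat \<Rightarrow> real) \<Rightarrow> nat \<Rightarrow> real" where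
  "social_cost n x y a = (\<Sum>i<n. euc_d x y i a)"

(* dist_alpha(a, E): sup over 1-Euclidean metrics alpha-consistent with the profile.
   Ratios are taken in ereal (positive/0 = \<infinity>). *)
definition dist_alt :: "real \<Rightarrow> nat \<Rightarrow> nat set \<Rightarrow> profile \<Rightarrow> nat \<Rightarrow> ereal" where
  "dist_alt \<alpha> n A \<sigma> a =
     (SUP xy \<in> {(x, y). alpha_consistent \<alpha> n A \<sigma> x y}.
        ereal (social_cost n (fst xy) (snd xy) a) /
        ereal (MIN b\<in>A. social_cost n (fst xy) (snd xy) b))"

definition distortion_2 :: "real \<Rightarrow> (nat \<Rightarrow> nat set \<Rightarrow> profile \<Rightarrow> nat) \<Rightarrow> ereal" where
  "distortion_2 \<alpha> f =
     (SUP E \<in> {(n, A, \<sigma>). valid_election n A \<sigma> \<and> card A = 2}.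
        (case E of (n, A, \<sigma>) \<Rightarrow> dist_alt \<alpha> n A \<sigma> (f n A \<sigma>)))"

end

theory Submission
  imports Defs
begin

(* Take two agents who rank the two alternatives oppositely with the same intensity.
   Whatever the rule picks, some placement on the line consistent with the profile makes the
   pick bad. For strong preferences: the picked alternative at 0, the other at 1 + \<alpha>, its
   supporter at 1 + \<alpha> and the other agent at \<alpha>, which gives ratio 2\<alpha> + 1. For weak
   preferences: the picked alternative at 0, the other at 2, the other's supporter at t and
   the remaining agent at 1, where t > 2 and t - 2 > \<alpha> t; the ratio (t + 1)/(t - 1) tends to
   (3 - \<alpha>)/(1 + \<alpha>) as t decreases to 2/(1 - \<alpha>), so that bound is a supremum, not attained. *)

lemma ratio_le_dist_alt:
  assumes "alpha_consistent \<alpha> n A \<sigma> x y"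
    and "0 < (MIN b\<in>A. social_cost n x y b)"
    and "r \<le> social_cost n x y a / (MIN b\<in>A. social_cost n x y b)"
  shows "ereal r \<le> dist_alt \<alpha> n A \<sigma> a"
proof -
  have "ereal r \<le> ereal (social_cost n x y a) / ereal (MIN b\<in>A. social_cost n x y b)"
    using assms(2,3) by simp
  also have "\<dots> \<le> dist_alt \<alpha> n A \<sigma> a"
    unfolding dist_alt_def by (rule SUP_upper2[where i="(x, y)"]) (use assms(1) in auto)
  finally show ?thesis .
qed

lemma dist_alt_le_distortion_2:
  assumes "valid_election n A \<sigma>" and "card A = 2"
  shows "dist_alt \<alpha> n A \<sigma> (f n A \<sigma>) \<le> distortion_2 \<alpha> f"
  unfolding distortion_2_def by (rule SUP_upper2[where i="(n, A, \<sigma>)"]) (use assms in auto)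

definition opposed_profile :: "intensity \<Rightarrow> profile" where
  "opposed_profile I i = ((\<lambda>k. if k = 1 then i else 1 - i), \<lambda>_. I)"

lemma valid_election_opposed_profile: "valid_election 2 {0, 1} (opposed_profile I)"
proof -
  have "bij_betw (\<lambda>k. if k = 1 then i else 1 - i) {1..2::nat} {0, 1}" if "i < 2" for i :: nat
    using that unfolding bij_betw_def inj_on_def by (auto simp: image_def less_2_cases_iff)
  then show ?thesis
    unfolding valid_election_def opposed_profile_def by (simp add: numeral_2_eq_2)
qed

lemma alpha_consistent_opposed_profile:
  "alpha_consistent \<alpha> 2 {0, 1} (opposed_profile I) x y \<longleftrightarrow>
     (I = Weak \<longrightarrow> \<bar>x 0 - y 0\<bar> \<le> \<bar>x 0 - y 1\<bar> \<and> \<alpha> * \<bar>x 0 - y 1\<bar> < \<bar>x 0 - y 0\<bar> \<and>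
                   \<bar>x 1 - y 1\<bar> \<le> \<bar>x 1 - y 0\<bar> \<and> \<alpha> * \<bar>x 1 - y 0\<bar> < \<bar>x 1 - y 1\<bar>) \<and>
     (I = Strong \<longrightarrow> \<bar>x 0 - y 0\<bar> \<le> \<alpha> * \<bar>x 0 - y 1\<bar> \<and> \<bar>x 1 - y 1\<bar> \<le> \<alpha> * \<bar>x 1 - y 0\<bar>)"
proof -
  have agents: "(\<forall>i<2. P i) \<longleftrightarrow> P 0 \<and> P (1::nat)" for P
    by (auto simp: less_Suc_eq numeral_2_eq_2)
  show ?thesis
    unfolding alpha_consistent_def
    by (simp only: agents) (auto simp: Let_def opposed_profile_def euc_d_def)
qed

lemma social_cost_two_agents: "social_cost 2 x y a = \<bar>x 0 - y a\<bar> + \<bar>x 1 - y a\<bar>"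
  unfolding social_cost_def euc_d_def by (simp add: numeral_2_eq_2)

lemma dist_alt_opposed_Strong:
  assumes "0 \<le> \<alpha>" and "a \<in> {0, 1}"
  shows "ereal (2 * \<alpha> + 1) \<le> dist_alt \<alpha> 2 {0, 1} (opposed_profile Strong) a"
proof (cases "a = 0")
  case True
  show ?thesis
    by (rule ratio_le_dist_alt[where x="\<lambda>i. if i = 0 then \<alpha> else 1 + \<alpha>"
                                and y="\<lambda>b. if b = 0 then 0 else 1 + \<alpha>"])
       (use assms True in
           \<open>auto simp: alpha_consistent_opposed_profile social_cost_two_agents
                  simp del: One_nat_def\<close>)
next
  case False
  with assms(2) have "a = 1" by simp
  show ?thesis
    by (rule ratio_le_dist_alt[where x="\<lambda>i. if i = 0 then 0 else 1"
                                and y="\<lambda>b. if b = 0 then 0 else 1 + \<alpha>"])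
       (use assms \<open>a = 1\<close> in
           \<open>auto simp: alpha_consistent_opposed_profile social_cost_two_agents
                  simp del: One_nat_def\<close>)
qed

lemma dist_alt_opposed_Weak_ratio:
  assumes "2 < t" and "\<alpha> * t < t - 2" and "a \<in> {0, 1}"
  shows "ereal ((t + 1) / (t - 1)) \<le> dist_alt \<alpha> 2 {0, 1} (opposed_profile Weak) a"
proof -
  have "\<alpha> * t < 1 * t"
    using assms(2) by simp
  then have "\<alpha> < 1"
    using assms(1) by (simp add: mult_less_cancel_right)
  show ?thesis
  proof (cases "a = 0")
    case True
    show ?thesis
      by (rule ratio_le_dist_alt[where x="\<lambda>i. if i = 0 then 1 else t"
                                  and y="\<lambda>b. if b = 0 then 0 else 2"])
         (use assms \<open>\<alpha> < 1\<close> True in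
           \<open>auto simp: alpha_consistent_opposed_profile social_cost_two_agents add.commute
                  simp del: One_nat_def\<close>)
  next
    case False
    with assms(3) have "a = 1" by simp
    show ?thesis
      by (rule ratio_le_dist_alt[where x="\<lambda>i. if i = 0 then 2 - t else 1"
                                  and y="\<lambda>b. if b = 0 then 0 else 2"])
         (use assms \<open>\<alpha> < 1\<close> \<open>a = 1\<close> in
           \<open>auto simp: alpha_consistent_opposed_profile social_cost_two_agents
                  simp del: One_nat_def\<close>)
  qed
qed

lemma dist_alt_opposed_Weak:
  assumes "0 \<le> \<alpha>" and "\<alpha> < 1" and "a \<in> {0, 1}"
  shows "ereal ((3 - \<alpha>) / (1 + \<alpha>)) \<le> dist_alt \<alpha> 2 {0, 1} (opposed_profile Weak) a"
proof (rule dense_le_bounded[of "ereal 1"])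
  show "ereal 1 < ereal ((3 - \<alpha>) / (1 + \<alpha>))"
    using assms(1,2) by (simp add: field_simps)
next
  fix w assume "ereal 1 < w" and "w < ereal ((3 - \<alpha>) / (1 + \<alpha>))"
  then obtain c where w: "w = ereal c" and "1 < c" and "c * (1 + \<alpha>) < 3 - \<alpha>"
    using assms(1) by (cases w) (auto simp: field_simps)
  define t where "t = (c + 1) / (c - 1)"
  have "\<alpha> \<le> c * \<alpha>"
    using mult_right_mono[of 1 c \<alpha>] \<open>1 < c\<close> assms(1) by simp
  then have "c < 3"
    using \<open>c * (1 + \<alpha>) < 3 - \<alpha>\<close> assms(1) by (simp add: algebra_simps)
  then have "2 < t"
    using \<open>1 < c\<close> by (simp add: t_def field_simps)
  moreover have "\<alpha> * t < t - 2"
  proof -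
    have "2 * (c - 1) < (1 - \<alpha>) * (c + 1)"
      using \<open>c * (1 + \<alpha>) < 3 - \<alpha>\<close> by (simp add: algebra_simps)
    then have "2 < (1 - \<alpha>) * t"
      using \<open>1 < c\<close> by (simp add: t_def field_simps)
    then show ?thesis by (simp add: algebra_simps)
  qed
  moreover have "(t + 1) / (t - 1) = c"
    using \<open>1 < c\<close> by (simp add: t_def field_simps)
  ultimately show "w \<le> dist_alt \<alpha> 2 {0, 1} (opposed_profile Weak) a"
    using dist_alt_opposed_Weak_ratio[OF _ _ assms(3)] w by metis
qed

theorem theorem6:
  fixes \<alpha> :: real and f :: "nat \<Rightarrow> nat set \<Rightarrow> profile \<Rightarrow> nat"
  assumes "0 < \<alpha>" and "\<alpha> \<le> 1"
    and "\<And>n A \<sigma>. valid_election n A \<sigma> \<Longrightarrow> card A = 2 \<Longrightarrow> f n A \<sigma> \<in> A"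
  shows "distortion_2 \<alpha> f \<ge> ereal (max ((3 - \<alpha>) / (1 + \<alpha>)) (2 * \<alpha> + 1))"
proof -
  have card: "card {0::nat, 1} = 2" by simp
  have rule_bound: "dist_alt \<alpha> 2 {0, 1} (opposed_profile I) (f 2 {0, 1} (opposed_profile I))
                      \<le> distortion_2 \<alpha> f" for I
    by (rule dist_alt_le_distortion_2[OF valid_election_opposed_profile card])
  have picks: "f 2 {0, 1} (opposed_profile I) \<in> {0, 1}" for I
    by (rule assms(3)[OF valid_election_opposed_profile card])
  have strong: "ereal (2 * \<alpha> + 1) \<le> distortion_2 \<alpha> f"
    using dist_alt_opposed_Strong[OF _ picks] rule_bound assms(1) by (meson less_imp_le order_trans)
  show ?thesis
  proof (cases "\<alpha> < 1")
    case True
    then have "ereal ((3 - \<alpha>) / (1 + \<alpha>)) \<le> distortion_2 \<alpha> f"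
      using dist_alt_opposed_Weak[OF _ _ picks] rule_bound assms(1) by (meson less_imp_le order_trans)
    with strong show ?thesis by (simp add: max_def)
  next
    case False
    with assms(2) have "max ((3 - \<alpha>) / (1 + \<alpha>)) (2 * \<alpha> + 1) = 2 * \<alpha> + 1" by simp
    with strong show ?thesis by simp
  qed
qed

end
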